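(* Let $F$ be a bijection of $\mathbb F_2^m$ with $F(0)=0$. Then $F$ is APN if and only if $v_F(a)=2^{m-1}$ for all $a\in\mathbb F_2^m\setminus\{0\}$.
   Context: $F:\mathbb F_2^m\to\mathbb F_2^m$ with $F(0)=0$ is APN (almost perfect nonlinear) if for all $a,b\in\mathbb F_2^m$ with $b\ne 0$ the equation $F(x)+F(x+b)=a$ has at most two solutions $x\in\mathbb F_2^m$. For nonzero $a$, $v_F(a)=|\{x+F^{-1}(a+F(x)) : x\in\mathbb F_2^m\}|$. *)

theory Defs
  imports "HOL-Analysis.Analysis" "HOL-Library.Z2"
begin

text \<open>F_2^m is modelled as bit ^ 'n (vectors over the two-element field, indexed by a
finite type 'n with m = CARD('n)); addition is componentwise addition mod 2.\<close>

definition APN :: "(bit ^ 'n \<Rightarrow> bit ^ 'n) \<Rightarrow> bool" where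
  "APN F \<longleftrightarrow> (\<forall>a b. b \<noteq> 0 \<longrightarrow> card {x. F x + F (x + b) = a} \<le> 2)"

definition vF :: "(bit ^ 'n \<Rightarrow> bit ^ 'n) \<Rightarrow> bit ^ 'n \<Rightarrow> nat" where
  "vF F a = card ((\<lambda>x. x + inv F (a + F x)) ` UNIV)"

end

theory Submission
  imports Defs
begin

text \<open>For a \<noteq> 0 the map g x = x + F\<inverse>(a + F x) takes the value b exactly on the solutions of
F x + F (x + b) = a. These solution sets are closed under x \<mapsto> x + b, and b \<noteq> 0 on them,
so every nonempty fibre of g has at least two elements. Counting the 2^m points, g takes at most
2^(m-1) values, with equality iff every nonempty solution set has exactly two elements; for a
bijection these are exactly the solution sets with b \<noteq> 0 that APN-ness bounds.\<close>

lemma card_eq_mult_card_image_iff: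
  assumes "finite A" and fibre_ge: "\<And>y. y \<in> f ` A \<Longrightarrow> k \<le> card {x\<in>A. f x = y}"
  shows "card A = k * card (f ` A) \<longleftrightarrow> (\<forall>y\<in>f ` A. card {x\<in>A. f x = y} = k)"
proof -
  define c where "c y = card {x\<in>A. f x = y}" for y
  have "card A = (\<Sum>y\<in>f ` A. c y)"
    using sum.image_gen[OF assms(1), of "\<lambda>_. 1::nat" f] by (simp add: c_def)
  also have "\<dots> = (\<Sum>y\<in>f ` A. k + (c y - k))"
    using fibre_ge by (intro sum.cong) (auto simp: c_def)
  also have "\<dots> = k * card (f ` A) + (\<Sum>y\<in>f ` A. c y - k)"
    by (simp add: sum.distrib mult.commute)
  finally have "card A = k * card (f ` A) \<longleftrightarrow> (\<forall>y\<in>f ` A. c y - k = 0)"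
    using assms(1) by simp
  also have "\<dots> \<longleftrightarrow> (\<forall>y\<in>f ` A. c y = k)"
    using fibre_ge by (auto simp: c_def intro!: le_antisym)
  finally show ?thesis by (simp add: c_def)
qed

lemma bitvec_add_self [simp]: "(x::bit^'n) + x = 0"
  by (simp add: vec_eq_iff)

lemma bitvec_add_eq_iff: "(x::bit^'n) + y = z \<longleftrightarrow> y = x + z"
  by (auto simp flip: add.assoc)

lemma UNIV_bit: "(UNIV::bit set) = {0, 1}"
  by auto

instance bit :: finite
  by standard (simp add: UNIV_bit)

lemma card_bitvec: "CARD(bit^'n) = 2 ^ CARD('n)"
  by (simp add: UNIV_bit numeral_2_eq_2)

definition derivative_solutions :: "(bit^'n \<Rightarrow> bit^'n) \<Rightarrow> bit^'n \<Rightarrow> bit^'n \<Rightarrow> (bit^'n) set"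
  where "derivative_solutions F b a = {x. F x + F (x + b) = a}"

lemma derivative_solutions_add:
  assumes "x \<in> derivative_solutions F b a"
  shows "x + b \<in> derivative_solutions F b a"
proof -
  have "x + b + b = x"
    by (simp add: add.assoc)
  then show ?thesis
    using assms by (simp add: derivative_solutions_def add.commute)
qed

lemma card_derivative_solutions_ge_2:
  assumes "b \<noteq> 0" and "x \<in> derivative_solutions F b a"
  shows "2 \<le> card (derivative_solutions F b a)"
proof -
  have "x \<noteq> x + b"
    using assms(1) bitvec_add_eq_iff[of x b x] by auto
  moreover have "{x, x + b} \<subseteq> derivative_solutions F b a"
    using assms(2) derivative_solutions_add by blast
  ultimately show ?thesis
    using card_mono[of "derivative_solutions F b a" "{x, x + b}"] by simp
qed

lemma derivative_solutions_eq_zero_iff: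
  assumes "inj F" and "x \<in> derivative_solutions F b a"
  shows "a = 0 \<longleftrightarrow> b = 0"
proof -
  have "a = 0 \<longleftrightarrow> F (x + b) = F x"
    using assms(2) bitvec_add_eq_iff[of "F x" "F (x + b)" a]
    by (auto simp: derivative_solutions_def)
  also have "\<dots> \<longleftrightarrow> x + b = x"
    using assms(1) by (rule inj_eq)
  also have "\<dots> \<longleftrightarrow> b = 0"
    by (simp add: bitvec_add_eq_iff)
  finally show ?thesis .
qed

lemma fibre_eq_derivative_solutions:
  fixes F :: "bit^'n \<Rightarrow> bit^'n"
  assumes "bij F"
  shows "{x. x + inv F (a + F x) = b} = derivative_solutions F b a"
proof -
  have "x + inv F (a + F x) = b \<longleftrightarrow> F x + F (x + b) = a" for x
  proof -
    have "x + inv F (a + F x) = b \<longleftrightarrow> inv F (a + F x) = x + b"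
      by (rule bitvec_add_eq_iff)
    also have "\<dots> \<longleftrightarrow> a + F x = F (x + b)"
      using assms by (metis bij_inv_eq_iff)
    also have "\<dots> \<longleftrightarrow> F x + F (x + b) = a"
      by (metis add.commute bitvec_add_eq_iff)
    finally show ?thesis .
  qed
  then show ?thesis by (simp add: derivative_solutions_def)
qed

lemma vF_eq_iff:
  fixes F :: "bit^'n \<Rightarrow> bit^'n"
  assumes "bij F" and "a \<noteq> 0"
  shows "vF F a = 2 ^ (CARD('n) - 1) \<longleftrightarrow>
    (\<forall>b. derivative_solutions F b a \<noteq> {} \<longrightarrow> card (derivative_solutions F b a) = 2)"
proof -
  define g where "g x = x + inv F (a + F x)" for x
  have fibre: "{x\<in>UNIV. g x = b} = derivative_solutions F b a" for b
    using fibre_eq_derivative_solutions[OF assms(1)] by (simp add: g_def)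
  have in_range: "b \<in> range g \<longleftrightarrow> derivative_solutions F b a \<noteq> {}" for b
    by (auto simp flip: fibre)
  have fibre_ge: "2 \<le> card {x\<in>UNIV. g x = b}" if "b \<in> range g" for b
  proof -
    have "derivative_solutions F b a \<noteq> {}"
      using in_range[of b] that by (rule iffD1)
    then obtain x where x: "x \<in> derivative_solutions F b a"
      by blast
    have "b \<noteq> 0"
      using derivative_solutions_eq_zero_iff[OF bij_is_inj[OF assms(1)] x] assms(2) by simp
    then show ?thesis
      unfolding fibre by (rule card_derivative_solutions_ge_2[OF _ x])
  qed
  have "CARD('n) = Suc (CARD('n) - 1)"
    by simp
  then have "CARD(bit^'n) = 2 * 2 ^ (CARD('n) - 1)"
    by (metis card_bitvec power_Suc)
  then have "vF F a = 2 ^ (CARD('n) - 1) \<longleftrightarrow> CARD(bit^'n) = 2 * card (range g)"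
    unfolding vF_def g_def by linarith
  also have "\<dots> \<longleftrightarrow> (\<forall>b\<in>range g. card {x\<in>UNIV. g x = b} = 2)"
    using card_eq_mult_card_image_iff[OF finite fibre_ge] .
  finally show ?thesis
    unfolding Ball_def in_range fibre .
qed

lemma APN_iff_card_derivative_solutions:
  fixes F :: "bit^'n \<Rightarrow> bit^'n"
  assumes "inj F"
  shows "APN F \<longleftrightarrow> (\<forall>a b. a \<noteq> 0 \<longrightarrow> derivative_solutions F b a \<noteq> {} \<longrightarrow>
                              card (derivative_solutions F b a) = 2)"
proof -
  have "(b \<noteq> 0 \<longrightarrow> card (derivative_solutions F b a) \<le> 2) \<longleftrightarrow>
    (a \<noteq> 0 \<longrightarrow> derivative_solutions F b a \<noteq> {} \<longrightarrow> card (derivative_solutions F b a) = 2)"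
    for a b
  proof (cases "derivative_solutions F b a = {}")
    case False
    then obtain x where x: "x \<in> derivative_solutions F b a"
      by blast
    have "a = 0 \<longleftrightarrow> b = 0"
      by (rule derivative_solutions_eq_zero_iff[OF assms x])
    moreover have "b \<noteq> 0 \<Longrightarrow> 2 \<le> card (derivative_solutions F b a)"
      using card_derivative_solutions_ge_2[OF _ x] .
    ultimately show ?thesis
      using False by auto
  qed simp
  then show ?thesis
    unfolding APN_def derivative_solutions_def[symmetric] by blast
qed

theorem mainTheorem10:
  fixes F :: "bit ^ 'n \<Rightarrow> bit ^ 'n"
  assumes "bij F" and "F 0 = 0"
  shows "APN F \<longleftrightarrow> (\<forall>a. a \<noteq> 0 \<longrightarrow> vF F a = 2 ^ (CARD('n) - 1))"
  unfolding APN_iff_card_derivative_solutions[OF bij_is_inj[OF assms(1)]]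
  using vF_eq_iff[OF assms(1)] by blast

end
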